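(* Let $\hat{\mathcal{O}}_{(\lambda,\lambda')}$ be an irreducible projective quantum field which obeys spin-statistics. Then (i) if $\hat{\mathcal{O}}_{(\lambda,\lambda')}$ is bosonic, both $\lambda$ and $\lambda'$ consist of a single row; (ii) if $\hat{\mathcal{O}}_{(\lambda,\lambda')}$ is fermionic, both $\lambda$ and $\lambda'$ consist of a single column.
   Context: Projective quantum field $\hat{\mathcal{O}}=(U,\rho,\{[\hat{\mathcal{O}}([x])]\})$: $U$ a projective unitary representation of $\mathrm{PGL}_5\mathbb{R}$ on a complex Hilbert space; $\rho$ a finite-dimensional complex representation ($\dim\rho\ne0$) of the universal cover of $\mathrm{PGL}_5\mathbb{R}$; $\hat{\mathcal{O}}([x])$, $[x]\in\mathbb{RP}^4$, tuples of nonzero operator-valued tempered distributions modulo $C^\infty(\mathbb{RP}^4,\mathbb{R}_{\ne0})$ prefactors on a common dense invariant domain, with bounded smearings and $U([g])\hat{\mathcal{O}}_\alpha([x])U^\dagger([g])=\sum_\beta\rho_{\alpha\beta}([g^{-1}])\hat{\mathcal{O}}_\beta([g\cdot x])$. It is bosonic/fermionic if the multiplier of $U$ is trivial/nontrivial in $H^2(\mathrm{PGL}_5\mathbb{R},\mathrm{U}(1))\cong\mathbb{Z}_2$. It is irreducible if the induced Lie algebra representation $\tilde\rho$ of $\mathfrak{pgl}_5\mathbb{R}\cong\mathfrak{sl}_5\mathbb{R}$ is irreducible, i.e. $\tilde\rho$ is the Schur module $\mathbb{CP}^4_{(\lambda,\lambda')}$ of the fundamental representation for a pair of Young diagrams $(\lambda,\lambda')$;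 such a field is written $\hat{\mathcal{O}}_{(\lambda,\lambda')}$ and is regarded as the composite field obtained from a field $\hat{\mathcal{O}}$ with fundamental $\rho$ by applying the Young symmetrizer of $(\lambda,\lambda')$ (symmetrization of the $p=\#\lambda$ upper and $q=\#\lambda'$ lower indices along rows, antisymmetrization along columns) to the components $\hat{\mathcal{O}}_{\alpha_1}\cdots\hat{\mathcal{O}}_{\alpha_p}\Xi^{-1}\hat{\mathcal{O}}^*_{\beta_1}\cdots\hat{\mathcal{O}}^*_{\beta_q}\Xi$ ($\Xi$ Riesz map, $\hat{\mathcal{O}}^*$ dual operators). A composite field $\hat{\mathcal{O}}'_\gamma=\sum a_{\gamma,\alpha_1\dots\alpha_p,\beta_1\dots\beta_q}\hat{\mathcal{O}}_{\alpha_1}\cdots\hat{\mathcal{O}}_{\alpha_p}\Xi^{-1}\hat{\mathcal{O}}^*_{\beta_1}\cdots\hat{\mathcal{O}}^*_{\beta_q}\Xi$ obeys spin-statistics if, when bosonic, it equals its average over all permutations in $S_p\times S_q$ of the $\alpha$- and $\beta$-indices, and, when fermionic, its average weighted by $\mathrm{sgn}(\pi)\mathrm{sgn}(\pi')$. *)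

theory Defs
  imports "HOL-Analysis.Analysis" "HOL-Combinatorics.Permutations"
begin

text \<open>Young diagrams are lists of row lengths (weakly decreasing, positive).
  Boxes are numbered 0,1,2,... in row reading order (the standard tableau
  used to define the Young symmetrizer).\<close>

definition young_diagram :: "nat list \<Rightarrow> bool" where
  "young_diagram la \<longleftrightarrow> sorted_wrt (\<ge>) la \<and> (\<forall>r\<in>set la. 0 < r)"

definition row_set :: "nat list \<Rightarrow> nat \<Rightarrow> nat set" where
  "row_set la i = {sum_list (take i la) ..< sum_list (take i la) + la ! i}"

definition col_set :: "nat list \<Rightarrow> nat \<Rightarrow> nat set" where
  "col_set la j = {sum_list (take i la) + j | i. i < length la \<and> j < la ! i}"

definition row_group :: "nat list \<Rightarrow> (nat \<Rightarrow> nat) set" where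
  "row_group la = {p. p permutes {..<sum_list la} \<and>
      (\<forall>i<length la. p ` row_set la i = row_set la i)}"

definition col_group :: "nat list \<Rightarrow> (nat \<Rightarrow> nat) set" where
  "col_group la = {p. p permutes {..<sum_list la} \<and>
      (\<forall>j. p ` col_set la j = col_set la j)}"

text \<open>Composite field obtained by applying the Young symmetrizer of
  (la, la') (symmetrize along rows, antisymmetrize along columns) to the
  monomials  M al be = O_{al_1}...O_{al_p} Xi^-1 O*_{be_1}...O*_{be_q} Xi,
  where al, be are index lists of length p = #la, q = #la'.\<close>

definition young_field ::
  "nat list \<Rightarrow> nat list \<Rightarrow> ('i list \<Rightarrow> 'i list \<Rightarrow> 'v::real_vector) \<Rightarrow> 'i list \<Rightarrow> 'i list \<Rightarrow> 'v" where
  "young_field la la' M al be =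
     (\<Sum>r\<in>row_group la. \<Sum>c\<in>col_group la. \<Sum>r'\<in>row_group la'. \<Sum>c'\<in>col_group la'.
        of_int (sign c * sign c') *\<^sub>R M (permute_list (r \<circ> c) al) (permute_list (r' \<circ> c') be))"

definition obeys_spin_statistics ::
  "bool \<Rightarrow> nat \<Rightarrow> nat \<Rightarrow> ('i list \<Rightarrow> 'i list \<Rightarrow> 'v::real_vector) \<Rightarrow> bool" where
  "obeys_spin_statistics fermionic p q F \<longleftrightarrow>
     (\<forall>al be. length al = p \<longrightarrow> length be = q \<longrightarrow>
        F al be = (1 / (fact p * fact q)) *\<^sub>R
          (\<Sum>pi\<in>{pi. pi permutes {..<p}}. \<Sum>pi'\<in>{pi'. pi' permutes {..<q}}.
             (if fermionic then of_int (sign pi * sign pi') else 1) *\<^sub>R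
               F (permute_list pi al) (permute_list pi' be)))"

end

(*
  Let A be the symmetrizer of S_p x S_q weighted by the character chi of the statistics (trivial
  for bosons, the sign for fermions).  Since A g = chi(g) A for every permutation g, applying A to
  the Young-symmetrized field F gives w(la) w(la') times A M, where
  w(la) = sum over r in the row group and c in the column group of sign(c) chi(rc).
  For bosons w(la) = |R| * sum of sign(c), which vanishes once the column group contains a
  transposition, i.e. once la has two rows; for fermions sign(c) chi(rc) = sign(r), so
  w(la) = |C| * sum of sign(r), which vanishes once a row has two boxes.  Spin-statistics says
  F = A F / (p! q!), so a nonvanishing F forces both weights to be nonzero.
*)
theory Submission
  imports Defs
begin

lemma sum_sign_eq_0_if_odd_involution:
  assumes perm: "\<And>g. g \<in> G \<Longrightarrow> permutation g"
    and closed: "\<And>g h. g \<in> G \<Longrightarrow> h \<in> G \<Longrightarrow> g \<circ> h \<in> G"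
    and t: "t \<in> G" "t \<circ> t = id" "sign t = -1"
  shows "(\<Sum>g\<in>G. sign g) = (0::int)"
proof -
  have "(\<Sum>g\<in>G. sign g) = (\<Sum>g\<in>G. sign (t \<circ> g))"
    by (rule sum.reindex_bij_witness[where i = "(\<circ>) t" and j = "(\<circ>) t"])
      (auto simp: t closed simp flip: comp_assoc)
  also have "\<dots> = - (\<Sum>g\<in>G. sign g)"
    by (simp add: sign_compose perm t sum_negf)
  finally show ?thesis
    by simp
qed

lemma sum_list_take_mono:
  fixes xs :: "nat list"
  assumes "i \<le> k"
  shows "sum_list (take i xs) \<le> sum_list (take k xs)"
proof -
  obtain d where "k = i + d"
    using assms le_Suc_ex by blast
  then show ?thesis
    by (simp add: take_add)
qed

definition box_label :: "nat list \<Rightarrow> nat \<Rightarrow> nat \<Rightarrow> nat" where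
  "box_label la i j = sum_list (take i la) + j"

lemma box_label_less_next_row:
  "i < length la \<Longrightarrow> j < la ! i \<Longrightarrow> box_label la i j < box_label la (Suc i) 0"
  by (simp add: box_label_def take_Suc_conv_app_nth)

lemma box_label_less_later_row:
  assumes "i < i'" "i < length la" "j < la ! i"
  shows "box_label la i j < box_label la i' j'"
proof -
  have "box_label la (Suc i) 0 \<le> box_label la i' j'"
    unfolding box_label_def using assms(1) sum_list_take_mono[of "Suc i" i' la] by simp
  then show ?thesis
    using box_label_less_next_row[OF assms(2,3)] by simp
qed

lemma box_label_less_size:
  assumes "i < length la" "j < la ! i"
  shows "box_label la i j < sum_list la"
  using box_label_less_later_row[of i "length la" la j 0] assms by (simp add: box_label_def)

lemma box_label_eq_iff:
  assumes "i < length la" "j < la ! i" "i' < length la" "j' < la ! i'"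
  shows "box_label la i j = box_label la i' j' \<longleftrightarrow> i = i' \<and> j = j'"
proof
  assume eq: "box_label la i j = box_label la i' j'"
  have "i = i'"
    using box_label_less_later_row[OF _ assms(1,2), of i' j']
      box_label_less_later_row[OF _ assms(3,4), of i j] eq
    by (cases i i' rule: linorder_cases) auto
  with eq show "i = i' \<and> j = j'"
    by (simp add: box_label_def)
qed simp

lemma row_set_box_label: "row_set la i = box_label la i ` {..<la ! i}"
proof -
  have "{n..<n + m} = (+) n ` {..<m}" for n m :: nat
    by (simp add: lessThan_atLeast0 image_add_atLeastLessThan add.commute[of n])
  then show ?thesis
    by (simp add: row_set_def box_label_def)
qed

lemma col_set_box_label: "col_set la j = {box_label la i j | i. i < length la \<and> j < la ! i}"
  by (simp add: col_set_def box_label_def)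

lemma box_label_in_row_set_iff:
  assumes "i < length la" "j < la ! i" "i' < length la"
  shows "box_label la i j \<in> row_set la i' \<longleftrightarrow> i' = i"
  using assms by (auto simp: row_set_box_label box_label_eq_iff)

lemma box_label_in_col_set_iff:
  assumes "i < length la" "j < la ! i"
  shows "box_label la i j \<in> col_set la j' \<longleftrightarrow> j' = j"
  using assms by (auto simp: col_set_box_label box_label_eq_iff)

lemma permutation_if_row_group: "p \<in> row_group la \<Longrightarrow> permutation p"
  by (auto simp: row_group_def permutation_permutes)

lemma permutation_if_col_group: "p \<in> col_group la \<Longrightarrow> permutation p"
  by (auto simp: col_group_def permutation_permutes)

lemma row_group_compose: "p \<in> row_group la \<Longrightarrow> q \<in> row_group la \<Longrightarrow> p \<circ> q \<in> row_group la"
  by (simp add: row_group_def permutes_compose flip: image_image)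

lemma col_group_compose: "p \<in> col_group la \<Longrightarrow> q \<in> col_group la \<Longrightarrow> p \<circ> q \<in> col_group la"
  by (simp add: col_group_def permutes_compose flip: image_image)

lemma transpose_in_row_group:
  assumes "i < length la" "j < la ! i" "j' < la ! i"
  shows "Transposition.transpose (box_label la i j) (box_label la i j') \<in> row_group la"
  using assms
  by (auto simp: row_group_def box_label_in_row_set_iff intro!: permutes_swap_id box_label_less_size)

lemma transpose_in_col_group:
  assumes "i < length la" "i' < length la" "j < la ! i" "j < la ! i'"
  shows "Transposition.transpose (box_label la i j) (box_label la i' j) \<in> col_group la"
  using assms
  by (auto simp: col_group_def box_label_in_col_set_iff intro!: permutes_swap_id box_label_less_size)

lemma sum_sign_row_group_eq_0:
  assumes "r \<in> set la" "2 \<le> r"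
  shows "(\<Sum>p\<in>row_group la. sign p) = (0::int)"
proof -
  obtain i where i: "i < length la" "la ! i = r"
    using assms(1) by (auto simp: in_set_conv_nth)
  let ?t = "Transposition.transpose (box_label la i 0) (box_label la i 1)"
  show ?thesis
  proof (rule sum_sign_eq_0_if_odd_involution)
    show "?t \<in> row_group la"
      using i assms(2) by (intro transpose_in_row_group) auto
    show "sign ?t = -1"
      by (simp add: sign_swap_id box_label_def)
  qed (auto simp: permutation_if_row_group row_group_compose)
qed

lemma sum_sign_col_group_eq_0:
  assumes "young_diagram la" "2 \<le> length la"
  shows "(\<Sum>p\<in>col_group la. sign p) = (0::int)"
proof -
  have nonempty: "la \<noteq> []"
    using assms(2) by (cases la) auto
  have "la ! 0 \<in> set la" "la ! 1 \<in> set la"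
    using assms(2) by (auto intro!: nth_mem)
  then have rows_pos: "0 < la ! 0" "0 < la ! 1"
    using assms(1) by (auto simp: young_diagram_def)
  let ?t = "Transposition.transpose (box_label la 0 0) (box_label la 1 0)"
  show ?thesis
  proof (rule sum_sign_eq_0_if_odd_involution)
    show "?t \<in> col_group la"
      using assms(2) rows_pos by (intro transpose_in_col_group) auto
    show "sign ?t = -1"
      using box_label_less_next_row[of 0 la 0] nonempty rows_pos by (simp add: sign_swap_id)
  qed (auto simp: permutation_if_col_group col_group_compose)
qed

definition statistics_char :: "bool \<Rightarrow> (nat \<Rightarrow> nat) \<Rightarrow> real" where
  "statistics_char fermionic p = (if fermionic then of_int (sign p) else 1)"

lemma statistics_char_compose:
  "permutation p \<Longrightarrow> permutation q \<Longrightarrow>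
    statistics_char fe (p \<circ> q) = statistics_char fe p * statistics_char fe q"
  by (simp add: statistics_char_def sign_compose)

lemma statistics_char_square: "statistics_char fe p * statistics_char fe p = 1"
  by (simp add: statistics_char_def flip: of_int_mult)

lemma sum_statistics_char_compose_right:
  fixes f :: "(nat \<Rightarrow> nat) \<Rightarrow> 'v::real_vector"
  assumes h: "h permutes S" and S: "finite S"
  shows "(\<Sum>s\<in>{s. s permutes S}. statistics_char fe s *\<^sub>R f (s \<circ> h))
       = statistics_char fe h *\<^sub>R (\<Sum>s\<in>{s. s permutes S}. statistics_char fe s *\<^sub>R f s)"
proof -
  let ?\<chi> = "statistics_char fe"
  have "?\<chi> s = ?\<chi> h * ?\<chi> (s \<circ> h)" if "s permutes S" for s
  proof -
    have "permutation s" "permutation h"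
      using that h S by (auto simp: permutation_permutes)
    then have "?\<chi> h * ?\<chi> (s \<circ> h) = ?\<chi> s * (?\<chi> h * ?\<chi> h)"
      by (simp add: statistics_char_compose)
    then show ?thesis
      by (simp add: statistics_char_square)
  qed
  then have "(\<Sum>s\<in>{s. s permutes S}. ?\<chi> s *\<^sub>R f (s \<circ> h))
      = ?\<chi> h *\<^sub>R (\<Sum>s\<in>{s. s permutes S}. ?\<chi> (s \<circ> h) *\<^sub>R f (s \<circ> h))"
    by (simp add: scaleR_sum_right)
  also have "\<dots> = ?\<chi> h *\<^sub>R (\<Sum>s\<in>{s. s permutes S}. ?\<chi> s *\<^sub>R f s)"
    using sum_permutations_compose_right[OF h, of "\<lambda>s. ?\<chi> s *\<^sub>R f s"] by simp
  finally show ?thesis .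
qed

definition statistics_symmetrizer ::
  "bool \<Rightarrow> ('i list \<Rightarrow> 'j list \<Rightarrow> 'v::real_vector) \<Rightarrow> 'i list \<Rightarrow> 'j list \<Rightarrow> 'v" where
  "statistics_symmetrizer fermionic F al be =
     (\<Sum>s\<in>{s. s permutes {..<length al}}. \<Sum>s'\<in>{s'. s' permutes {..<length be}}.
        (statistics_char fermionic s * statistics_char fermionic s') *\<^sub>R
          F (permute_list s al) (permute_list s' be))"

lemma obeys_spin_statistics_iff:
  "obeys_spin_statistics fermionic p q F \<longleftrightarrow>
    (\<forall>al be. length al = p \<longrightarrow> length be = q \<longrightarrow>
       F al be = (1 / (fact p * fact q)) *\<^sub>R statistics_symmetrizer fermionic F al be)"
  by (cases fermionic) (simp_all add: obeys_spin_statistics_def statistics_symmetrizer_def statistics_char_def)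

lemma statistics_symmetrizer_sum:
  "statistics_symmetrizer fe (\<lambda>xs ys. \<Sum>k\<in>K. F k xs ys) al be
     = (\<Sum>k\<in>K. statistics_symmetrizer fe (F k) al be)"
  unfolding statistics_symmetrizer_def scaleR_sum_right
  by (subst sum.swap) (simp add: sum.swap[of _ K])

lemma statistics_symmetrizer_scaleR:
  "statistics_symmetrizer fe (\<lambda>xs ys. c *\<^sub>R F xs ys) al be
     = c *\<^sub>R statistics_symmetrizer fe F al be"
  by (simp add: statistics_symmetrizer_def scaleR_sum_right mult.commute)

lemma statistics_symmetrizer_permute:
  assumes g: "g permutes {..<length al}" and g': "g' permutes {..<length be}"
  shows "statistics_symmetrizer fe (\<lambda>xs ys. F (permute_list g xs) (permute_list g' ys)) al be
       = (statistics_char fe g * statistics_char fe g') *\<^sub>R statistics_symmetrizer fe F al be"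
proof -
  let ?\<chi> = "statistics_char fe"
  let ?P = "{s. s permutes {..<length al}}" and ?Q = "{s'. s' permutes {..<length be}}"
  let ?G = "\<lambda>s. \<Sum>s'\<in>?Q. ?\<chi> s' *\<^sub>R F (permute_list s al) (permute_list s' be)"
  have inner: "(\<Sum>s'\<in>?Q. ?\<chi> s' *\<^sub>R F xs (permute_list (s' \<circ> g') be))
      = ?\<chi> g' *\<^sub>R (\<Sum>s'\<in>?Q. ?\<chi> s' *\<^sub>R F xs (permute_list s' be))" for xs
    using sum_statistics_char_compose_right[OF g', of fe "\<lambda>s'. F xs (permute_list s' be)"] by simp
  have "statistics_symmetrizer fe (\<lambda>xs ys. F (permute_list g xs) (permute_list g' ys)) al be
      = (\<Sum>s\<in>?P. ?\<chi> s *\<^sub>R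
           (\<Sum>s'\<in>?Q. ?\<chi> s' *\<^sub>R F (permute_list (s \<circ> g) al) (permute_list (s' \<circ> g') be)))"
    by (simp add: statistics_symmetrizer_def scaleR_sum_right permute_list_compose g g')
  also have "\<dots> = ?\<chi> g' *\<^sub>R (\<Sum>s\<in>?P. ?\<chi> s *\<^sub>R ?G (s \<circ> g))"
    by (simp add: inner scaleR_sum_right mult_ac)
  also have "\<dots> = (?\<chi> g * ?\<chi> g') *\<^sub>R (\<Sum>s\<in>?P. ?\<chi> s *\<^sub>R ?G s)"
    by (simp add: sum_statistics_char_compose_right[OF g, of fe ?G])
  also have "\<dots> = (?\<chi> g * ?\<chi> g') *\<^sub>R statistics_symmetrizer fe F al be"
    by (simp add: statistics_symmetrizer_def scaleR_sum_right)
  finally show ?thesis .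
qed

definition young_weight :: "bool \<Rightarrow> nat list \<Rightarrow> real" where
  "young_weight fermionic la =
     (\<Sum>r\<in>row_group la. \<Sum>c\<in>col_group la. of_int (sign c) * statistics_char fermionic (r \<circ> c))"

lemma young_weight_bosonic_eq_0:
  assumes "young_diagram la" "2 \<le> length la"
  shows "young_weight False la = 0"
  using sum_sign_col_group_eq_0[OF assms]
  by (simp add: young_weight_def statistics_char_def flip: of_int_sum)

lemma young_weight_fermionic_eq_0:
  assumes "r \<in> set la" "2 \<le> r"
  shows "young_weight True la = 0"
proof -
  have "sign c * sign (p \<circ> c) = sign p" if "p \<in> row_group la" "c \<in> col_group la" for p c
    using that by (simp add: sign_compose permutation_if_row_group permutation_if_col_group)
  then have "young_weight True la = (\<Sum>p\<in>row_group la. \<Sum>c\<in>col_group la. of_int (sign p))"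
    by (simp add: young_weight_def statistics_char_def flip: of_int_mult)
  also have "\<dots> = of_nat (card (col_group la)) * of_int (\<Sum>p\<in>row_group la. sign p)"
    by (simp add: sum_distrib_left)
  finally show ?thesis
    by (simp add: sum_sign_row_group_eq_0[OF assms])
qed

lemma statistics_symmetrizer_young_field:
  assumes "length al = sum_list la" "length be = sum_list la'"
  shows "statistics_symmetrizer fe (young_field la la' M) al be
       = (young_weight fe la * young_weight fe la') *\<^sub>R statistics_symmetrizer fe M al be"
proof -
  let ?\<chi> = "statistics_char fe"
  have permutes: "r \<circ> c permutes {..<sum_list l}" if "r \<in> row_group l" "c \<in> col_group l" for r c l
    using that by (auto simp: row_group_def col_group_def intro: permutes_compose)
  have "young_field la la' M = (\<lambda>xs ys.
      \<Sum>r\<in>row_group la. \<Sum>c\<in>col_group la. \<Sum>r'\<in>row_group la'. \<Sum>c'\<in>col_group la'.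
        of_int (sign c * sign c') *\<^sub>R M (permute_list (r \<circ> c) xs) (permute_list (r' \<circ> c') ys))"
    by (simp add: fun_eq_iff young_field_def)
  then have "statistics_symmetrizer fe (young_field la la' M) al be =
      (\<Sum>r\<in>row_group la. \<Sum>c\<in>col_group la. \<Sum>r'\<in>row_group la'. \<Sum>c'\<in>col_group la'.
        (of_int (sign c * sign c') * (?\<chi> (r \<circ> c) * ?\<chi> (r' \<circ> c'))) *\<^sub>R
          statistics_symmetrizer fe M al be)"
    using assms
    by (simp add: statistics_symmetrizer_sum statistics_symmetrizer_scaleR
        statistics_symmetrizer_permute permutes)
  also have "\<dots> = (young_weight fe la * young_weight fe la') *\<^sub>R statistics_symmetrizer fe M al be"
    unfolding young_weight_def sum_distrib_right
    unfolding sum_distrib_left scaleR_sum_left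
    by (simp add: mult_ac)
  finally show ?thesis .
qed

theorem proposition3p23:
  fixes la la' :: "nat list"
    and M :: "'i list \<Rightarrow> 'i list \<Rightarrow> 'v::real_vector"
    and fermionic :: bool
  assumes "CARD('i) = 5"
    and "young_diagram la" and "young_diagram la'"
    and "\<exists>al be. length al = sum_list la \<and> length be = sum_list la' \<and>
           young_field la la' M al be \<noteq> 0"
    and "obeys_spin_statistics fermionic (sum_list la) (sum_list la') (young_field la la' M)"
  shows "(\<not> fermionic \<longrightarrow> length la \<le> 1 \<and> length la' \<le> 1) \<and>
         (fermionic \<longrightarrow> (\<forall>r\<in>set la. r \<le> 1) \<and> (\<forall>r\<in>set la'. r \<le> 1))"
proof (rule ccontr)
  assume "\<not> ?thesis"
  then have weight_0: "young_weight fermionic la = 0 \<or> young_weight fermionic la' = 0"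
    using young_weight_bosonic_eq_0 young_weight_fermionic_eq_0 assms(2,3)
    by (cases fermionic) (auto simp: not_le Suc_le_eq)
  obtain al be where lengths: "length al = sum_list la" "length be = sum_list la'"
    and nonzero: "young_field la la' M al be \<noteq> 0"
    using assms(4) by blast
  have "young_field la la' M al be = (1 / (fact (sum_list la) * fact (sum_list la'))) *\<^sub>R
      statistics_symmetrizer fermionic (young_field la la' M) al be"
    using assms(5) lengths by (simp add: obeys_spin_statistics_iff)
  also have "\<dots> = 0"
    using weight_0 by (auto simp: statistics_symmetrizer_young_field lengths)
  finally show False
    using nonzero by contradiction
qed

end
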